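(* Let $a=\{a_1,\dots,a_m\}$ and $b=\{b_1,\dots,b_m\}$ be positive integers with $a_r\neq b_r$ for all $r$, and fix $n\ge 0$. There is a function $P_{n,a,b}:\mathbb{Z}_{\ge0}\to\mathbb{Q}$ and a number $N=N(n,a,b)$ such that for every $s\ge1$ and all positive integers $k_1,\dots,k_s$ with $k_1+1,\dots,k_s+1$ primes larger than $N$, the number of $n$-element independent sets of $G(a,b,k_1)+\cdots+G(a,b,k_s)$ equals $P_{n,a,b}(k_1+\cdots+k_s)$. Furthermore, if the ratios $a_1/b_1,\dots,a_m/b_m$ are multiplicatively independent, then $P_{n,a,b}$ can be chosen to depend only on $n$ and $m$ (i.e. the same function works for all such $a,b$ with the same $m$).
   Context: A set $\{c_1,\dots,c_m\}$ of positive rationals is multiplicatively independent if $c_1^{i_1}\cdots c_m^{i_m}=1$ with integers $i_1,\dots,i_m$ implies $i_1=\dots=i_m=0$. For positive integers $k$, $G(a,b,k)$ is the simple graph with vertex set $\{1,2,\dots,k\}$ in which distinct vertices $i,j$ are adjacent if and only if $a_ri\equiv b_rj\pmod{k+1}$ or $a_rj\equiv b_ri\pmod{k+1}$ for some $1\le r\le m$. $G_1+\cdots+G_s$ denotes the disjoint union of graphs. An independent set is a set of vertices no two of which are adjacent. *)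

theory Defs
  imports Complex_Main "HOL-Number_Theory.Number_Theory"
begin

(* a, b are lists of length m; index r ranges over 0..<m (0-based). *)

text \<open>Adjacency in G(a,b,k) on vertex set {1..k}.\<close>
definition gadj :: "nat list \<Rightarrow> nat list \<Rightarrow> nat \<Rightarrow> nat \<Rightarrow> nat \<Rightarrow> bool" where
  "gadj a b k i j \<longleftrightarrow> i \<noteq> j \<and>
     (\<exists>r<length a. [a!r * i = b!r * j] (mod (k+1)) \<or> [a!r * j = b!r * i] (mod (k+1)))"

text \<open>Disjoint union G(a,b,k_1)+...+G(a,b,k_s): vertices (t,i) with t < s, 1 <= i <= k_t.\<close>
definition union_verts :: "nat list \<Rightarrow> (nat \<times> nat) set" where
  "union_verts ks = {(t,i). t < length ks \<and> i \<in> {1..ks!t}}"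

definition union_adj :: "nat list \<Rightarrow> nat list \<Rightarrow> nat list \<Rightarrow> nat \<times> nat \<Rightarrow> nat \<times> nat \<Rightarrow> bool" where
  "union_adj a b ks x y \<longleftrightarrow> fst x = fst y \<and> gadj a b (ks ! fst x) (snd x) (snd y)"

definition num_indep_sets :: "nat list \<Rightarrow> nat list \<Rightarrow> nat list \<Rightarrow> nat \<Rightarrow> nat" where
  "num_indep_sets a b ks n = card {S. S \<subseteq> union_verts ks \<and> card S = n \<and>
      (\<forall>x\<in>S. \<forall>y\<in>S. \<not> union_adj a b ks x y)}"

definition mult_indep :: "rat list \<Rightarrow> bool" where
  "mult_indep cs \<longleftrightarrow> (\<forall>e :: nat \<Rightarrow> int.
      (\<Prod>r<length cs. (cs!r) powi (e r)) = 1 \<longrightarrow> (\<forall>r<length cs. e r = 0))"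

definition ratios :: "nat list \<Rightarrow> nat list \<Rightarrow> rat list" where
  "ratios a b = map (\<lambda>r. of_nat (a!r) / of_nat (b!r)) [0..<length a]"

definition admissible :: "nat \<Rightarrow> nat list \<Rightarrow> nat list \<Rightarrow> bool" where
  "admissible m a b \<longleftrightarrow> length a = m \<and> length b = m \<and>
     (\<forall>r<m. a!r > 0 \<and> b!r > 0 \<and> a!r \<noteq> b!r)"

end

theory Submission
  imports Defs
begin

text \<open>
  An independent \<open>n\<close>-set, listed in order, is a map \<open>x\<close> on \<open>{0..<n}\<close> sending no pair
  \<open>i < j\<close> to equal or adjacent vertices.  By inclusion--exclusion over sets \<open>F\<close> of such pairs,
  it suffices to count the maps sending every pair of \<open>F\<close> to equal or adjacent vertices; these
  counts multiply over the components of the graph \<open>F\<close>, and a connected component lands in a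
  single summand \<open>G(a,b,k)\<close>.  Fixing the image \<open>v\<close> of a root, the image of a vertex at
  distance \<open>d\<close> is \<open>v\<close> times a product of at most \<open>d\<close> of the ratios \<open>a\<^sub>r/b\<^sub>r\<close> and their
  inverses modulo the prime \<open>p = k + 1\<close>, so the rooted count depends only on which such
  products coincide modulo \<open>p\<close>.  Once \<open>p\<close> exceeds all numerators and denominators involved
  they coincide modulo \<open>p\<close> iff they coincide in \<open>\<rat>\<close>, which does not depend on \<open>k\<close> or
  \<open>v\<close>; under multiplicative independence it happens iff both products use every ratio with
  the same net exponent, which depends only on \<open>m\<close>.  So a component contributes
  \<open>(k\<^sub>1 + \<dots> + k\<^sub>s)\<close> times a constant.
\<close>

section \<open>Counting maps into a relation\<close>

lemma card_avoiding_eq_if_card_satisfying_eq: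
  fixes Q :: "'p \<Rightarrow> 'a \<Rightarrow> bool" and Q' :: "'p \<Rightarrow> 'b \<Rightarrow> bool"
  assumes "finite P" "finite X" "finite X'"
    and "\<And>F. F \<subseteq> P \<Longrightarrow> card {x\<in>X. \<forall>p\<in>F. Q p x} = card {x\<in>X'. \<forall>p\<in>F. Q' p x}"
  shows "card {x\<in>X. \<forall>p\<in>P. \<not> Q p x} = card {x\<in>X'. \<forall>p\<in>P. \<not> Q' p x}"
  using assms
proof (induction P arbitrary: X X' rule: finite_induct)
  case empty
  then show ?case using empty.prems(3)[of "{}"] by simp
next
  case (insert q P)
  have avoid_insert: "card {x\<in>Y. \<forall>p\<in>insert q P. \<not> S p x} =
      card {x\<in>Y. \<forall>p\<in>P. \<not> S p x} - card {x\<in>{x\<in>Y. S q x}. \<forall>p\<in>P. \<not> S p x}"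
    if "finite Y" for Y and S :: "'p \<Rightarrow> 'c \<Rightarrow> bool"
  proof -
    have "{x\<in>Y. \<forall>p\<in>insert q P. \<not> S p x} =
        {x\<in>Y. \<forall>p\<in>P. \<not> S p x} - {x\<in>{x\<in>Y. S q x}. \<forall>p\<in>P. \<not> S p x}"
      by auto
    then show ?thesis using that by (simp add: card_Diff_subset subset_iff)
  qed
  have avoid: "card {x\<in>X. \<forall>p\<in>P. \<not> Q p x} = card {x\<in>X'. \<forall>p\<in>P. \<not> Q' p x}"
    using insert.prems by (intro insert.IH) auto
  have avoid_q: "card {x\<in>{x\<in>X. Q q x}. \<forall>p\<in>P. \<not> Q p x} = card {x\<in>{x\<in>X'. Q' q x}. \<forall>p\<in>P. \<not> Q' p x}"
  proof (rule insert.IH)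
    fix F assume "F \<subseteq> P"
    then have "card {x\<in>X. \<forall>p\<in>insert q F. Q p x} = card {x\<in>X'. \<forall>p\<in>insert q F. Q' p x}"
      by (intro insert.prems) auto
    then show "card {x\<in>{x\<in>X. Q q x}. \<forall>p\<in>F. Q p x} = card {x\<in>{x\<in>X'. Q' q x}. \<forall>p\<in>F. Q' p x}"
      by (simp add: conj_assoc)
  qed (use insert.prems in auto)
  have "card {x\<in>X. \<forall>p\<in>insert q P. \<not> Q p x} =
      card {x\<in>X. \<forall>p\<in>P. \<not> Q p x} - card {x\<in>{x\<in>X. Q q x}. \<forall>p\<in>P. \<not> Q p x}"
    by (rule avoid_insert[OF insert.prems(1)])
  also have "\<dots> = card {x\<in>X'. \<forall>p\<in>P. \<not> Q' p x} - card {x\<in>{x\<in>X'. Q' q x}. \<forall>p\<in>P. \<not> Q' p x}"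
    by (simp only: avoid avoid_q)
  also have "\<dots> = card {x\<in>X'. \<forall>p\<in>insert q P. \<not> Q' p x}"
    by (rule avoid_insert[OF insert.prems(2), symmetric])
  finally show ?case .
qed

definition homs :: "'v set \<Rightarrow> ('v \<Rightarrow> 'v \<Rightarrow> bool) \<Rightarrow> 'i set \<Rightarrow> ('i \<times> 'i) set \<Rightarrow> ('i \<Rightarrow> 'v) set" where
  "homs V R I E = {x \<in> I \<rightarrow>\<^sub>E V. \<forall>(i, j)\<in>E. i \<in> I \<longrightarrow> j \<in> I \<longrightarrow> R (x i) (x j)}"

definition sym_edges_on :: "'i set \<Rightarrow> ('i \<times> 'i) set \<Rightarrow> ('i \<times> 'i) set" where
  "sym_edges_on I E = {(i, j). ((i, j) \<in> E \<or> (j, i) \<in> E) \<and> i \<in> I \<and> j \<in> I}"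

lemma homs_iff:
  "x \<in> homs V R I E \<longleftrightarrow>
     x \<in> I \<rightarrow>\<^sub>E V \<and> (\<forall>i j. (i, j) \<in> E \<longrightarrow> i \<in> I \<longrightarrow> j \<in> I \<longrightarrow> R (x i) (x j))"
  by (auto simp: homs_def)

lemma finite_homs: "finite I \<Longrightarrow> finite V \<Longrightarrow> finite (homs V R I E)"
  unfolding homs_def by (rule finite_subset[of _ "I \<rightarrow>\<^sub>E V"]) (auto intro: finite_PiE)

lemma restrict_in_homs: "x \<in> homs V R I E \<Longrightarrow> C \<subseteq> I \<Longrightarrow> restrict x C \<in> homs V R C E"
  by (auto simp: homs_iff subset_iff)

lemma card_homs_split:
  assumes "C \<subseteq> I" and closed: "\<And>i j. (i, j) \<in> E \<Longrightarrow> i \<in> I \<Longrightarrow> j \<in> I \<Longrightarrow> i \<in> C \<longleftrightarrow> j \<in> C"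
  shows "card (homs V R I E) = card (homs V R C E) * card (homs V R (I - C) E)"
proof -
  let ?split = "\<lambda>x. (restrict x C, restrict x (I - C))"
  let ?merge = "\<lambda>(y, z) j. if j \<in> C then y j else z j"
  have "bij_betw ?split (homs V R I E) (homs V R C E \<times> homs V R (I - C) E)"
  proof (rule bij_betw_byWitness[where f' = ?merge])
    show "\<forall>x\<in>homs V R I E. ?merge (?split x) = x"
    proof
      fix x assume "x \<in> homs V R I E"
      then have "x j = undefined" if "j \<notin> I" for j
        using that by (auto simp: homs_def intro: PiE_arb)
      then show "?merge (?split x) = x" using \<open>C \<subseteq> I\<close> by (auto simp: fun_eq_iff)
    qed
    show "\<forall>yz\<in>homs V R C E \<times> homs V R (I - C) E. ?split (?merge yz) = yz"
    proof
      fix yz assume "yz \<in> homs V R C E \<times> homs V R (I - C) E"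
      then have "fst yz j = undefined" if "j \<notin> C" for j
        using that by (auto simp: homs_def intro: PiE_arb)
      moreover from \<open>yz \<in> _\<close> have "snd yz j = undefined" if "j \<notin> I - C" for j
        using that by (auto simp: homs_def intro: PiE_arb)
      ultimately show "?split (?merge yz) = yz" by (auto simp: fun_eq_iff split: prod.split)
    qed
    show "?split ` homs V R I E \<subseteq> homs V R C E \<times> homs V R (I - C) E"
      using restrict_in_homs \<open>C \<subseteq> I\<close> by blast
    show "?merge ` (homs V R C E \<times> homs V R (I - C) E) \<subseteq> homs V R I E"
    proof
      fix x assume "x \<in> ?merge ` (homs V R C E \<times> homs V R (I - C) E)"
      then obtain y z where x: "x = (\<lambda>j. if j \<in> C then y j else z j)"
        and y: "y \<in> homs V R C E" and z: "z \<in> homs V R (I - C) E" by auto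
      have "x \<in> I \<rightarrow>\<^sub>E V"
        using y z \<open>C \<subseteq> I\<close> by (auto simp: x homs_def PiE_iff extensional_def)
      moreover have "R (x i) (x j)" if "(i, j) \<in> E" "i \<in> I" "j \<in> I" for i j
        using that closed[OF that] y z by (auto simp: x homs_iff)
      ultimately show "x \<in> homs V R I E" by (simp add: homs_iff)
    qed
  qed
  then show ?thesis by (simp add: bij_betw_same_card card_cartesian_product)
qed

definition component :: "'i set \<Rightarrow> ('i \<times> 'i) set \<Rightarrow> 'i \<Rightarrow> 'i set" where
  "component J E i0 = {j \<in> J. (i0, j) \<in> (sym_edges_on J E)\<^sup>*}"

lemma component_closed:
  assumes "(i, j) \<in> E" "i \<in> J" "j \<in> J"
  shows "i \<in> component J E i0 \<longleftrightarrow> j \<in> component J E i0"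
proof -
  have "(i, j) \<in> sym_edges_on J E" "(j, i) \<in> sym_edges_on J E"
    using assms by (auto simp: sym_edges_on_def)
  then show ?thesis using assms by (auto simp: component_def intro: rtrancl_into_rtrancl)
qed

lemma component_connected:
  "(i0, j) \<in> (sym_edges_on J E)\<^sup>* \<Longrightarrow> (i0, j) \<in> (sym_edges_on (component J E i0) E)\<^sup>*"
proof (induction rule: rtrancl_induct)
  case (step y z)
  then have "(y, z) \<in> sym_edges_on (component J E i0) E"
    by (auto simp: component_def sym_edges_on_def intro: rtrancl_into_rtrancl)
  with step.IH show ?case by (rule rtrancl_into_rtrancl)
qed simp

lemma card_homs_eq_if_connected_eq:
  assumes "finite I"
    and connected: "\<And>C i0. C \<subseteq> I \<Longrightarrow> i0 \<in> C \<Longrightarrow> \<forall>j\<in>C. (i0, j) \<in> (sym_edges_on C E)\<^sup>* \<Longrightarrow>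
      card (homs V R C E) = card (homs V' R' C E)"
  shows "card (homs V R I E) = card (homs V' R' I E)"
proof -
  have "J \<subseteq> I \<Longrightarrow> card (homs V R J E) = card (homs V' R' J E)" for J
  proof (induction "card J" arbitrary: J rule: less_induct)
    case less
    show ?case
    proof (cases "J = {}")
      case True
      then show ?thesis by (simp add: homs_def)
    next
      case False
      then obtain i0 where "i0 \<in> J" by blast
      let ?C = "component J E i0"
      have "?C \<subseteq> J" "i0 \<in> ?C" using \<open>i0 \<in> J\<close> by (auto simp: component_def)
      have "(i0, j) \<in> (sym_edges_on ?C E)\<^sup>*" if "j \<in> ?C" for j
        using that component_connected[of i0 j J E] by (simp add: component_def)
      then have "card (homs V R ?C E) = card (homs V' R' ?C E)"
        using connected[OF _ \<open>i0 \<in> ?C\<close>] \<open>?C \<subseteq> J\<close> less.prems by blast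
      moreover have "card (homs V R (J - ?C) E) = card (homs V' R' (J - ?C) E)"
      proof (rule less.hyps)
        have "finite J" using less.prems \<open>finite I\<close> by (rule finite_subset)
        then show "card (J - ?C) < card J" using \<open>i0 \<in> ?C\<close> \<open>?C \<subseteq> J\<close> by (intro psubset_card_mono) auto
      qed (use less.prems in auto)
      ultimately show ?thesis
        using card_homs_split[where E = E, OF \<open>?C \<subseteq> J\<close> component_closed, of V R]
          card_homs_split[where E = E, OF \<open>?C \<subseteq> J\<close> component_closed, of V' R'] by simp
    qed
  qed
  then show ?thesis by simp
qed

definition rooted_homs ::
    "'v set \<Rightarrow> ('v \<Rightarrow> 'v \<Rightarrow> bool) \<Rightarrow> 'i set \<Rightarrow> ('i \<times> 'i) set \<Rightarrow> 'i \<Rightarrow> 'v \<Rightarrow> ('i \<Rightarrow> 'v) set" where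
  "rooted_homs V R I E i0 v = {x \<in> homs V R I E. x i0 = v}"

lemma card_homs_eq_sum_rooted:
  assumes "finite V" "finite I" "i0 \<in> I"
  shows "card (homs V R I E) = (\<Sum>v\<in>V. card (rooted_homs V R I E i0 v))"
proof -
  have "homs V R I E = (\<Union>v\<in>V. rooted_homs V R I E i0 v)"
    using assms(3) by (auto simp: rooted_homs_def homs_def)
  also have "card \<dots> = (\<Sum>v\<in>V. card (rooted_homs V R I E i0 v))"
  proof (rule card_UN_disjoint[OF assms(1)])
    show "\<forall>v\<in>V. finite (rooted_homs V R I E i0 v)"
      using finite_homs[OF assms(2,1)] by (simp add: rooted_homs_def)
  qed (auto simp: rooted_homs_def)
  finally show ?thesis .
qed

definition indep_sets :: "'v set \<Rightarrow> ('v \<Rightarrow> 'v \<Rightarrow> bool) \<Rightarrow> nat \<Rightarrow> 'v set set" where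
  "indep_sets V adj n = {S. S \<subseteq> V \<and> card S = n \<and> (\<forall>x\<in>S. \<forall>y\<in>S. \<not> adj x y)}"

lemma card_distinct_lists_with_set_in:
  assumes "finite F" "\<And>S. S \<in> F \<Longrightarrow> finite S \<and> card S = n"
  shows "card {xs. length xs = n \<and> distinct xs \<and> set xs \<in> F} = card F * fact n"
proof -
  have set_eq: "set xs = S" if "S \<in> F" "length xs = n" "distinct xs" "set xs \<subseteq> S" for S xs
    using that assms(2)[OF that(1)] by (metis card_subset_eq distinct_card)
  have "{xs. length xs = n \<and> distinct xs \<and> set xs \<in> F} =
      (\<Union>S\<in>F. {xs. length xs = n \<and> distinct xs \<and> set xs \<subseteq> S})"
    using set_eq by blast
  also have "card \<dots> = (\<Sum>S\<in>F. card {xs. length xs = n \<and> distinct xs \<and> set xs \<subseteq> S})"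
  proof (rule card_UN_disjoint[OF assms(1)])
    show "\<forall>S\<in>F. finite {xs. length xs = n \<and> distinct xs \<and> set xs \<subseteq> S}"
    proof
      fix S assume "S \<in> F"
      then have "finite {xs. set xs \<subseteq> S \<and> length xs = n}"
        using assms(2) by (simp add: finite_lists_length_eq)
      then show "finite {xs. length xs = n \<and> distinct xs \<and> set xs \<subseteq> S}"
        by (rule finite_subset[rotated]) auto
    qed
  qed (use set_eq in blast)
  also have "\<dots> = card F * fact n"
    using assms(2) by (simp add: card_lists_distinct_length_eq fact_prod)
  finally show ?thesis .
qed

lemma ordered_pairs_iff_distinct_pairs:
  fixes n :: nat
  assumes "\<And>u v. R u v \<Longrightarrow> R v u"
  shows "(\<forall>p\<in>{(i, j). i < j \<and> j < n}. \<not> R (x (fst p)) (x (snd p))) \<longleftrightarrow>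
    (\<forall>i<n. \<forall>j<n. i \<noteq> j \<longrightarrow> \<not> R (x i) (x j))"
proof
  assume ordered: "\<forall>p\<in>{(i, j). i < j \<and> j < n}. \<not> R (x (fst p)) (x (snd p))"
  show "\<forall>i<n. \<forall>j<n. i \<noteq> j \<longrightarrow> \<not> R (x i) (x j)"
  proof (intro allI impI)
    fix i j assume "i < n" "j < n" "i \<noteq> j"
    then consider "i < j" | "j < i" by linarith
    then show "\<not> R (x i) (x j)" using ordered assms \<open>i < n\<close> \<open>j < n\<close> by cases auto
  qed
qed auto

lemma card_indep_sets_mult_fact:
  assumes "finite V" and sym: "\<And>u v. adj u v \<Longrightarrow> adj v u" and irrefl: "\<And>u. \<not> adj u u"
  shows "card (indep_sets V adj n) * fact n =
    card {x \<in> {0..<n} \<rightarrow>\<^sub>E V. \<forall>p\<in>{(i, j). i < j \<and> j < n}.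
      \<not> (x (fst p) = x (snd p) \<or> adj (x (fst p)) (x (snd p)))}"
    (is "_ = card ?M")
proof -
  let ?L = "{xs. length xs = n \<and> distinct xs \<and> set xs \<in> indep_sets V adj n}"
  have "finite (indep_sets V adj n)"
    using \<open>finite V\<close> by (auto simp: indep_sets_def intro: finite_subset[of _ "Pow V"])
  then have "card (indep_sets V adj n) * fact n = card ?L"
    using \<open>finite V\<close> by (subst card_distinct_lists_with_set_in) (auto simp: indep_sets_def intro: finite_subset)
  also have "\<dots> = card ?M"
  proof (rule bij_betw_same_card[OF bij_betw_byWitness[where f' = "\<lambda>x. map x [0..<n]"]])
    have M_iff: "x \<in> ?M \<longleftrightarrow> x \<in> {0..<n} \<rightarrow>\<^sub>E V \<and> (\<forall>i<n. \<forall>j<n. i \<noteq> j \<longrightarrow> x i \<noteq> x j \<and> \<not> adj (x i) (x j))" for x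
      using ordered_pairs_iff_distinct_pairs[of "\<lambda>u v. u = v \<or> adj u v" n x] sym by auto
    show "\<forall>xs\<in>?L. map (restrict (\<lambda>i. xs ! i) {0..<n}) [0..<n] = xs"
      by (auto intro: nth_equalityI)
    show "\<forall>x\<in>?M. restrict (\<lambda>i. map x [0..<n] ! i) {0..<n} = x"
      by (auto simp: PiE_iff extensional_def fun_eq_iff)
    show "(\<lambda>xs. restrict (\<lambda>i. xs ! i) {0..<n}) ` ?L \<subseteq> ?M"
      unfolding M_iff by (auto simp: indep_sets_def nth_eq_iff_index_eq)
    show "(\<lambda>x. map x [0..<n]) ` ?M \<subseteq> ?L"
    proof
      fix xs assume "xs \<in> (\<lambda>x. map x [0..<n]) ` ?M"
      then obtain x where "x \<in> ?M" and xs: "xs = map x [0..<n]" by blast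
      then have x: "x \<in> {0..<n} \<rightarrow>\<^sub>E V" "\<And>i j. i < n \<Longrightarrow> j < n \<Longrightarrow> i \<noteq> j \<Longrightarrow> x i \<noteq> x j \<and> \<not> adj (x i) (x j)"
        unfolding M_iff by auto
      then have "distinct (map x [0..<n])" by (auto simp: distinct_conv_nth)
      moreover have "set (map x [0..<n]) \<in> indep_sets V adj n"
        using x irrefl distinct_card[OF \<open>distinct (map x [0..<n])\<close>] by (auto simp: indep_sets_def) metis
      ultimately show "xs \<in> ?L" by (simp add: xs)
    qed
  qed
  finally show ?thesis .
qed

lemma homs_on_ordered_pairs:
  fixes n :: nat
  assumes "E \<subseteq> {(i, j). i < j \<and> j < n}"
  shows "homs V R {0..<n} E = {x \<in> {0..<n} \<rightarrow>\<^sub>E V. \<forall>p\<in>E. R (x (fst p)) (x (snd p))}"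
  using assms by (fastforce simp: homs_def)

lemma card_indep_sets_eq_if_card_homs_eq:
  fixes n :: nat
  assumes "finite V" "\<And>u v. adj u v \<Longrightarrow> adj v u" "\<And>u. \<not> adj u u"
    and "finite V'" "\<And>u v. adj' u v \<Longrightarrow> adj' v u" "\<And>u. \<not> adj' u u"
    and homs_eq: "\<And>E. E \<subseteq> {(i, j). i < j \<and> j < n} \<Longrightarrow>
      card (homs V (\<lambda>u v. u = v \<or> adj u v) {0..<n} E) = card (homs V' (\<lambda>u v. u = v \<or> adj' u v) {0..<n} E)"
  shows "card (indep_sets V adj n) = card (indep_sets V' adj' n)"
proof -
  let ?avoid = "\<lambda>W R. {x \<in> {0..<n} \<rightarrow>\<^sub>E W. \<forall>p\<in>{(i, j). i < j \<and> j < n}. \<not> R (x (fst p)) (x (snd p))}"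
  have "card (?avoid V (\<lambda>u v. u = v \<or> adj u v)) = card (?avoid V' (\<lambda>u v. u = v \<or> adj' u v))"
  proof (rule card_avoiding_eq_if_card_satisfying_eq)
    show "finite {(i, j). i < j \<and> j < n}"
      by (rule finite_subset[of _ "{0..<n} \<times> {0..<n}"]) auto
    show "finite ({0..<n} \<rightarrow>\<^sub>E V)" "finite ({0..<n} \<rightarrow>\<^sub>E V')"
      using assms by (auto intro: finite_PiE)
  next
    fix F assume F: "F \<subseteq> {(i, j). i < j \<and> j < n}"
    show "card {x \<in> {0..<n} \<rightarrow>\<^sub>E V. \<forall>p\<in>F. x (fst p) = x (snd p) \<or> adj (x (fst p)) (x (snd p))} =
        card {x \<in> {0..<n} \<rightarrow>\<^sub>E V'. \<forall>p\<in>F. x (fst p) = x (snd p) \<or> adj' (x (fst p)) (x (snd p))}"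
      using homs_eq[OF F] by (simp only: homs_on_ordered_pairs[OF F])
  qed
  then have "card (indep_sets V adj n) * fact n = card (indep_sets V' adj' n) * fact n"
    by (simp only: card_indep_sets_mult_fact[OF assms(1-3)] card_indep_sets_mult_fact[OF assms(4-6)])
  then show ?thesis by simp
qed

section \<open>Words of ratios modulo a prime\<close>

text \<open>
  The letter \<open>(r, True)\<close> stands for the ratio \<open>a\<^sub>r/b\<^sub>r\<close> and \<open>(r, False)\<close> for \<open>b\<^sub>r/a\<^sub>r\<close>;
  \<open>word_rep a b p v w x\<close> says that \<open>x \<equiv> v \<cdot> num(w)/den(w) (mod p)\<close>.
\<close>

type_synonym word = "(nat \<times> bool) list"

definition letter_num :: "nat list \<Rightarrow> nat list \<Rightarrow> nat \<times> bool \<Rightarrow> nat" where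
  "letter_num a b l = (if snd l then a ! fst l else b ! fst l)"

definition letter_den :: "nat list \<Rightarrow> nat list \<Rightarrow> nat \<times> bool \<Rightarrow> nat" where
  "letter_den a b l = (if snd l then b ! fst l else a ! fst l)"

definition word_num :: "nat list \<Rightarrow> nat list \<Rightarrow> word \<Rightarrow> nat" where
  "word_num a b w = prod_list (map (letter_num a b) w)"

definition word_den :: "nat list \<Rightarrow> nat list \<Rightarrow> word \<Rightarrow> nat" where
  "word_den a b w = prod_list (map (letter_den a b) w)"

definition word_rep :: "nat list \<Rightarrow> nat list \<Rightarrow> nat \<Rightarrow> nat \<Rightarrow> word \<Rightarrow> nat \<Rightarrow> bool" where
  "word_rep a b p v w x \<longleftrightarrow> [x * word_den a b w = v * word_num a b w] (mod p)"

definition same_ratio_mod :: "nat list \<Rightarrow> nat list \<Rightarrow> nat \<Rightarrow> word \<Rightarrow> word \<Rightarrow> bool" where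
  "same_ratio_mod a b p w w' \<longleftrightarrow>
     [word_num a b w * word_den a b w' = word_num a b w' * word_den a b w] (mod p)"

definition unit_coeffs :: "nat list \<Rightarrow> nat list \<Rightarrow> nat \<Rightarrow> bool" where
  "unit_coeffs a b p \<longleftrightarrow> prime p \<and> length b = length a \<and> (\<forall>r<length a. a ! r \<in> {1..<p} \<and> b ! r \<in> {1..<p})"

text \<open>Adjacency in \<open>G(a,b,p - 1)\<close>, made reflexive, as a relation on residues modulo \<open>p\<close>.\<close>

definition linked :: "nat list \<Rightarrow> nat list \<Rightarrow> nat \<Rightarrow> nat \<Rightarrow> nat \<Rightarrow> bool" where
  "linked a b p u w \<longleftrightarrow> u = w \<or> (\<exists>r<length a. [a ! r * u = b ! r * w] (mod p) \<or> [a ! r * w = b ! r * u] (mod p))"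

lemma word_num_snoc [simp]: "word_num a b (w @ [l]) = word_num a b w * letter_num a b l"
  and word_den_snoc [simp]: "word_den a b (w @ [l]) = word_den a b w * letter_den a b l"
  and word_num_Nil [simp]: "word_num a b [] = 1"
  and word_den_Nil [simp]: "word_den a b [] = 1"
  by (simp_all add: word_num_def word_den_def)

lemma coprime_of_unit_residue: "prime (p :: nat) \<Longrightarrow> x \<in> {1..<p} \<Longrightarrow> coprime x p"
  using nat_dvd_not_less[of x p] prime_imp_coprime_nat[of p x] by (auto simp: coprime_commute)

lemma coprime_word_num_den:
  assumes "unit_coeffs a b p" "w \<in> lists ({..<length a} \<times> UNIV)"
  shows "coprime (word_num a b w) p \<and> coprime (word_den a b w) p"
  using assms(2)
proof (induction w)
  case (Cons l w)
  then have "fst l < length a" by auto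
  then have "coprime (letter_num a b l) p \<and> coprime (letter_den a b l) p"
    using assms(1) by (auto simp: unit_coeffs_def letter_num_def letter_den_def intro: coprime_of_unit_residue)
  with Cons show ?case by (simp add: word_num_def word_den_def)
qed (simp add: word_num_def word_den_def)

lemma word_rep_same_ratio:
  assumes "unit_coeffs a b p" "w \<in> lists ({..<length a} \<times> UNIV)"
    and "word_rep a b p v w x" "same_ratio_mod a b p w w'"
  shows "word_rep a b p v w' x"
proof -
  have "[x * word_den a b w' * word_den a b w = (x * word_den a b w) * word_den a b w'] (mod p)"
    by (simp add: ac_simps)
  also have "[(x * word_den a b w) * word_den a b w' = (v * word_num a b w) * word_den a b w'] (mod p)"
    using assms(3) unfolding word_rep_def by (rule cong_scalar_right)
  also have "[(v * word_num a b w) * word_den a b w' = v * (word_num a b w' * word_den a b w)] (mod p)"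
    using assms(4) unfolding same_ratio_mod_def by (metis cong_scalar_left mult.assoc)
  finally have "[x * word_den a b w' * word_den a b w = v * word_num a b w' * word_den a b w] (mod p)"
    by (simp add: ac_simps)
  moreover have "coprime (word_den a b w) p" using coprime_word_num_den[OF assms(1,2)] by simp
  ultimately show ?thesis unfolding word_rep_def using cong_mult_rcancel_nat by blast
qed

lemma same_ratio_of_word_rep:
  assumes "coprime v p" "word_rep a b p v w x" "word_rep a b p v w' x"
  shows "same_ratio_mod a b p w w'"
proof -
  have "[word_num a b w * word_den a b w' * v = (v * word_num a b w) * word_den a b w'] (mod p)"
    by (simp add: ac_simps)
  also have "[(v * word_num a b w) * word_den a b w' = (x * word_den a b w) * word_den a b w'] (mod p)"
    using assms(2) unfolding word_rep_def by (rule cong_scalar_right[OF cong_sym])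
  also have "[(x * word_den a b w) * word_den a b w' = (x * word_den a b w') * word_den a b w] (mod p)"
    by (simp add: ac_simps)
  also have "[(x * word_den a b w') * word_den a b w = (v * word_num a b w') * word_den a b w] (mod p)"
    using assms(3) unfolding word_rep_def by (rule cong_scalar_right)
  finally have "[word_num a b w * word_den a b w' * v = word_num a b w' * word_den a b w * v] (mod p)"
    by (simp add: ac_simps)
  then show ?thesis unfolding same_ratio_mod_def using cong_mult_rcancel_nat[OF assms(1)] by blast
qed

lemma word_rep_unique:
  assumes "unit_coeffs a b p" "w \<in> lists ({..<length a} \<times> UNIV)"
    and "word_rep a b p v w x" "word_rep a b p v w y" "x < p" "y < p"
  shows "x = y"
proof -
  have "[x * word_den a b w = y * word_den a b w] (mod p)"
    using assms(3,4) unfolding word_rep_def by (meson cong_sym cong_trans)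
  moreover have "coprime (word_den a b w) p" using coprime_word_num_den[OF assms(1,2)] by simp
  ultimately have "[x = y] (mod p)" using cong_mult_rcancel_nat by blast
  with assms(5,6) show ?thesis by (simp add: cong_less_modulus_unique_nat)
qed

lemma word_rep_snoc_iff:
  assumes "unit_coeffs a b p" "w \<in> lists ({..<length a} \<times> UNIV)" "word_rep a b p v w x"
  shows "word_rep a b p v (w @ [l]) y \<longleftrightarrow> [letter_num a b l * x = letter_den a b l * y] (mod p)"
proof -
  have x: "[letter_num a b l * x * word_den a b w = v * (word_num a b w * letter_num a b l)] (mod p)"
    using cong_scalar_left[OF assms(3)[unfolded word_rep_def], of "letter_num a b l"]
    by (simp add: ac_simps)
  have den: "coprime (word_den a b w) p" using coprime_word_num_den[OF assms(1,2)] by simp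
  have "word_rep a b p v (w @ [l]) y \<longleftrightarrow>
      [letter_den a b l * y * word_den a b w = v * (word_num a b w * letter_num a b l)] (mod p)"
    by (simp add: word_rep_def ac_simps)
  also have "\<dots> \<longleftrightarrow> [letter_den a b l * y * word_den a b w = letter_num a b l * x * word_den a b w] (mod p)"
    using x by (meson cong_sym cong_trans)
  also have "\<dots> \<longleftrightarrow> [letter_num a b l * x = letter_den a b l * y] (mod p)"
    by (simp only: cong_mult_rcancel_nat[OF den]) (rule cong_sym_eq)
  finally show ?thesis .
qed

lemma linked_iff_letter:
  "linked a b p x y \<longleftrightarrow>
     x = y \<or> (\<exists>l\<in>{..<length a} \<times> UNIV. [letter_num a b l * x = letter_den a b l * y] (mod p))"
proof -
  have "(\<exists>l\<in>{..<length a} \<times> UNIV. [letter_num a b l * x = letter_den a b l * y] (mod p)) \<longleftrightarrow>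
      (\<exists>r<length a. [a ! r * x = b ! r * y] (mod p) \<or> [b ! r * x = a ! r * y] (mod p))"
    by (auto simp: letter_num_def letter_den_def)
  then show ?thesis by (auto simp: linked_def cong_sym_eq)
qed

lemma word_rep_exists:
  assumes "unit_coeffs a b p" "w \<in> lists ({..<length a} \<times> UNIV)" "v \<in> {1..<p}"
  shows "\<exists>y\<in>{1..<p}. word_rep a b p v w y"
proof -
  have "prime p" using assms(1) by (simp add: unit_coeffs_def)
  have den: "coprime (word_den a b w) p" and num: "coprime (word_num a b w) p"
    using coprime_word_num_den[OF assms(1,2)] by auto
  obtain t where t: "[word_den a b w * t = 1] (mod p)" using cong_solve_coprime_nat[OF den] by auto
  define y where "y = (v * word_num a b w * t) mod p"
  have "[y * word_den a b w = (v * word_num a b w) * (word_den a b w * t)] (mod p)"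
    unfolding y_def cong_def by (metis mod_mult_left_eq mult.commute mult.left_commute)
  also have "[(v * word_num a b w) * (word_den a b w * t) = v * word_num a b w] (mod p)"
    using cong_scalar_left[OF t] by simp
  finally have rep: "word_rep a b p v w y" unfolding word_rep_def .
  have "coprime (v * word_num a b w) p"
    using coprime_of_unit_residue[OF \<open>prime p\<close> assms(3)] num by simp
  have "y \<noteq> 0"
  proof
    assume "y = 0"
    with rep have "p dvd v * word_num a b w" by (simp add: word_rep_def cong_0_iff[symmetric] cong_sym_eq)
    with \<open>coprime (v * word_num a b w) p\<close> have "is_unit p" by (meson coprime_common_divisor dvd_refl)
    with \<open>prime p\<close> show False by simp
  qed
  moreover have "y < p" using \<open>prime p\<close> unfolding y_def by (simp add: prime_gt_0_nat)
  ultimately show ?thesis using rep by auto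
qed

definition short_words :: "nat \<Rightarrow> nat \<Rightarrow> word set" where
  "short_words m h = {w \<in> lists ({..<m} \<times> UNIV). length w \<le> h}"

definition ratio_pattern :: "nat list \<Rightarrow> nat list \<Rightarrow> nat \<Rightarrow> nat \<Rightarrow> (word \<Rightarrow> word \<Rightarrow> bool) \<Rightarrow> bool" where
  "ratio_pattern a b p h Q \<longleftrightarrow>
     (\<forall>w\<in>short_words (length a) h. \<forall>w'\<in>short_words (length a) h. same_ratio_mod a b p w w' \<longleftrightarrow> Q w w')"

lemma short_words_mono: "d \<le> h \<Longrightarrow> w \<in> short_words m d \<Longrightarrow> w \<in> short_words m h"
  by (simp add: short_words_def)

lemma short_words_Suc: "w \<in> short_words m h \<Longrightarrow> w \<in> short_words m (Suc h)"
  by (simp add: short_words_def)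

lemma linked_sym: "linked a b p u w \<Longrightarrow> linked a b p w u"
  by (auto simp: linked_def)

lemma word_rep_along_path:
  assumes "unit_coeffs a b p" "x \<in> rooted_homs {1..<p} (linked a b p) I E i0 v"
  shows "(i0, j) \<in> sym_edges_on I E ^^ d \<Longrightarrow> \<exists>w\<in>short_words (length a) d. word_rep a b p v w (x j)"
proof (induction d arbitrary: j)
  case 0
  then show ?case using assms(2) by (auto simp: short_words_def word_rep_def rooted_homs_def)
next
  case (Suc d)
  then obtain i where "(i0, i) \<in> sym_edges_on I E ^^ d" and ij: "(i, j) \<in> sym_edges_on I E" by auto
  with Suc.IH obtain w where w: "w \<in> short_words (length a) d" "word_rep a b p v w (x i)" by blast
  have "linked a b p (x i) (x j)"
    using ij assms(2) by (auto simp: sym_edges_on_def rooted_homs_def homs_def intro: linked_sym)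
  then consider "x i = x j" | l where "l \<in> {..<length a} \<times> UNIV" "[letter_num a b l * x i = letter_den a b l * x j] (mod p)"
    by (auto simp: linked_iff_letter)
  then show ?case
  proof cases
    case 1
    then show ?thesis using w by (auto simp: short_words_def)
  next
    case 2
    with w word_rep_snoc_iff[OF assms(1)] have "word_rep a b p v (w @ [l]) (x j)"
      by (auto simp: short_words_def)
    moreover have "w @ [l] \<in> short_words (length a) (Suc d)" using w 2 by (auto simp: short_words_def)
    ultimately show ?thesis by blast
  qed
qed

context
  fixes a b a' b' :: "nat list" and p p' v v' L :: nat and Q :: "word \<Rightarrow> word \<Rightarrow> bool"
  assumes units: "unit_coeffs a b p" "unit_coeffs a' b' p'"
    and same_length: "length a' = length a"
    and roots: "v \<in> {1..<p}" "v' \<in> {1..<p'}"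
    and patterns: "ratio_pattern a b p (Suc L) Q" "ratio_pattern a' b' p' (Suc L) Q"
begin

lemma same_ratio_mod_transfer:
  "w \<in> short_words (length a) (Suc L) \<Longrightarrow> w' \<in> short_words (length a) (Suc L) \<Longrightarrow>
    same_ratio_mod a b p w w' \<longleftrightarrow> same_ratio_mod a' b' p' w w'"
  using patterns same_length by (simp add: ratio_pattern_def)

text \<open>
  A residue represented by a short word in the first model is sent to the residue represented by
  the same word in the second; the common pattern \<open>Q\<close> makes this independent of the word.  On
  other residues the value is unspecified.
\<close>

definition word_transfer :: "nat \<Rightarrow> nat" where
  "word_transfer u = (THE y. y \<in> {1..<p'} \<and>
     (\<exists>w\<in>short_words (length a) L. word_rep a b p v w u \<and> word_rep a' b' p' v' w y))"

lemma word_rep_word_transfer: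
  assumes w: "w \<in> short_words (length a) L" "word_rep a b p v w u"
  shows "word_transfer u \<in> {1..<p'} \<and> word_rep a' b' p' v' w (word_transfer u)"
proof -
  have w': "w \<in> lists ({..<length a'} \<times> UNIV)" using w same_length by (simp add: short_words_def)
  obtain y where y: "y \<in> {1..<p'}" "word_rep a' b' p' v' w y"
    using word_rep_exists[OF units(2) w' roots(2)] by blast
  have "y2 = y" if "y2 \<in> {1..<p'}" "w2 \<in> short_words (length a) L"
    "word_rep a b p v w2 u" "word_rep a' b' p' v' w2 y2" for y2 w2
  proof -
    have "coprime v p" using units(1) roots(1) by (simp add: unit_coeffs_def coprime_of_unit_residue)
    then have "same_ratio_mod a b p w w2" using w(2) that(3) by (rule same_ratio_of_word_rep)
    then have "same_ratio_mod a' b' p' w w2"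
      using same_ratio_mod_transfer short_words_Suc w(1) that(2) by blast
    then have "word_rep a' b' p' v' w2 y" using word_rep_same_ratio[OF units(2) w' y(2)] by blast
    then show ?thesis
      using word_rep_unique[OF units(2) _ that(4)] that(1,2) y(1) same_length
      by (auto simp: short_words_def)
  qed
  then have "word_transfer u = y"
    unfolding word_transfer_def using y w by (intro the_equality) blast+
  with y show ?thesis by simp
qed

lemma word_transfer_root: "word_transfer v = v'"
proof -
  have "[] \<in> short_words (length a) L" "word_rep a b p v [] v"
    by (simp_all add: short_words_def word_rep_def)
  then have "word_transfer v \<in> {1..<p'}" "word_rep a' b' p' v' [] (word_transfer v)"
    using word_rep_word_transfer by blast+
  then show ?thesis using roots(2) by (simp add: word_rep_def cong_less_modulus_unique_nat)
qed

lemma word_transfer_linked: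
  assumes w1: "w1 \<in> short_words (length a) L" "word_rep a b p v w1 u"
    and w2: "w2 \<in> short_words (length a) L" "word_rep a b p v w2 u'"
    and "linked a b p u u'"
  shows "linked a' b' p' (word_transfer u) (word_transfer u')"
proof -
  from \<open>linked a b p u u'\<close> consider "u = u'"
    | l where "l \<in> {..<length a} \<times> UNIV" "[letter_num a b l * u = letter_den a b l * u'] (mod p)"
    unfolding linked_iff_letter by blast
  then show ?thesis
  proof cases
    case 1
    then show ?thesis by (simp add: linked_def)
  next
    case (2 l)
    note l = 2
    have w1l: "w1 @ [l] \<in> short_words (length a) (Suc L)" using w1(1) l(1) by (auto simp: short_words_def)
    have "coprime v p" using units(1) roots(1) by (simp add: unit_coeffs_def coprime_of_unit_residue)
    moreover have "word_rep a b p v (w1 @ [l]) u'"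
      using word_rep_snoc_iff[OF units(1) _ w1(2)] w1(1) l(2) by (simp add: short_words_def)
    ultimately have "same_ratio_mod a b p w2 (w1 @ [l])" using w2(2) by (metis same_ratio_of_word_rep)
    then have "same_ratio_mod a' b' p' w2 (w1 @ [l])"
      using same_ratio_mod_transfer short_words_Suc w2(1) w1l by blast
    then have "word_rep a' b' p' v' (w1 @ [l]) (word_transfer u')"
      using word_rep_same_ratio[OF units(2)] word_rep_word_transfer[OF w2] w2(1) same_length
      by (auto simp: short_words_def)
    moreover have "w1 \<in> lists ({..<length a'} \<times> UNIV)"
      using w1(1) same_length by (simp add: short_words_def)
    ultimately have "[letter_num a' b' l * word_transfer u = letter_den a' b' l * word_transfer u'] (mod p')"
      using word_rep_snoc_iff[OF units(2)] word_rep_word_transfer[OF w1] by blast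
    then show ?thesis using l(1) same_length by (auto simp: linked_iff_letter)
  qed
qed

lemma word_transfer_inj:
  assumes w1: "w1 \<in> short_words (length a) L" "word_rep a b p v w1 u" "u < p"
    and w2: "w2 \<in> short_words (length a) L" "word_rep a b p v w2 u'" "u' < p"
    and "word_transfer u = word_transfer u'"
  shows "u = u'"
proof -
  have "coprime v' p'" using units(2) roots(2) by (simp add: unit_coeffs_def coprime_of_unit_residue)
  then have "same_ratio_mod a' b' p' w1 w2"
    using word_rep_word_transfer[OF w1(1,2)] word_rep_word_transfer[OF w2(1,2)] \<open>word_transfer u = word_transfer u'\<close>
    by (metis same_ratio_of_word_rep)
  then have "same_ratio_mod a b p w1 w2"
    using same_ratio_mod_transfer short_words_Suc w1(1) w2(1) by blast
  then have "word_rep a b p v w2 u"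
    using word_rep_same_ratio[OF units(1) _ w1(2)] w1(1) by (simp add: short_words_def)
  then show ?thesis
    using word_rep_unique[OF units(1) _ _ w2(2)] w2(1) w1(3) w2(3) by (simp add: short_words_def)
qed

lemma word_rep_on_component:
  assumes paths: "\<forall>j\<in>I. \<exists>d\<le>L. (i0, j) \<in> sym_edges_on I E ^^ d"
    and "x \<in> rooted_homs {1..<p} (linked a b p) I E i0 v" "j \<in> I"
  shows "\<exists>w\<in>short_words (length a) L. word_rep a b p v w (x j)"
proof -
  obtain d where "d \<le> L" "(i0, j) \<in> sym_edges_on I E ^^ d" using paths \<open>j \<in> I\<close> by blast
  then obtain w where "w \<in> short_words (length a) d" "word_rep a b p v w (x j)"
    using word_rep_along_path[OF units(1) assms(2)] by blast
  then show ?thesis using short_words_mono[OF \<open>d \<le> L\<close>] by blast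
qed

lemma inj_on_word_transfer_hom:
  assumes paths: "\<forall>j\<in>I. \<exists>d\<le>L. (i0, j) \<in> sym_edges_on I E ^^ d"
  shows "inj_on (\<lambda>x. restrict (word_transfer \<circ> x) I) (rooted_homs {1..<p} (linked a b p) I E i0 v)"
proof (rule inj_onI)
  fix x y assume x: "x \<in> rooted_homs {1..<p} (linked a b p) I E i0 v"
    and y: "y \<in> rooted_homs {1..<p} (linked a b p) I E i0 v"
    and eq: "restrict (word_transfer \<circ> x) I = restrict (word_transfer \<circ> y) I"
  have "x \<in> I \<rightarrow>\<^sub>E {1..<p}" "y \<in> I \<rightarrow>\<^sub>E {1..<p}" using x y by (simp_all add: rooted_homs_def homs_def)
  show "x = y"
  proof
    fix j show "x j = y j"
    proof (cases "j \<in> I")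
      case True
      then have "word_transfer (x j) = word_transfer (y j)" using fun_cong[OF eq, of j] by simp
      moreover have "x j < p" "y j < p"
        using \<open>x \<in> I \<rightarrow>\<^sub>E {1..<p}\<close> \<open>y \<in> I \<rightarrow>\<^sub>E {1..<p}\<close> True by auto
      moreover obtain w where "w \<in> short_words (length a) L" "word_rep a b p v w (x j)"
        using word_rep_on_component[OF paths x True] by blast
      moreover obtain w' where "w' \<in> short_words (length a) L" "word_rep a b p v w' (y j)"
        using word_rep_on_component[OF paths y True] by blast
      ultimately show ?thesis using word_transfer_inj by blast
    next
      case False
      then show ?thesis
        using PiE_arb[OF \<open>x \<in> I \<rightarrow>\<^sub>E {1..<p}\<close>] PiE_arb[OF \<open>y \<in> I \<rightarrow>\<^sub>E {1..<p}\<close>] by simp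
    qed
  qed
qed

lemma word_transfer_hom_in_rooted_homs:
  assumes paths: "\<forall>j\<in>I. \<exists>d\<le>L. (i0, j) \<in> sym_edges_on I E ^^ d"
    and "i0 \<in> I" and x: "x \<in> rooted_homs {1..<p} (linked a b p) I E i0 v"
  shows "restrict (word_transfer \<circ> x) I \<in> rooted_homs {1..<p'} (linked a' b' p') I E i0 v'"
proof -
  have "word_transfer (x j) \<in> {1..<p'}" if "j \<in> I" for j
    using word_rep_on_component[OF paths x that] word_rep_word_transfer by (meson bexE)
  moreover have "linked a' b' p' (word_transfer (x i)) (word_transfer (x j))"
    if ij: "(i, j) \<in> E" "i \<in> I" "j \<in> I" for i j
  proof -
    obtain w where "w \<in> short_words (length a) L" "word_rep a b p v w (x i)"
      using word_rep_on_component[OF paths x ij(2)] by blast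
    moreover obtain w' where "w' \<in> short_words (length a) L" "word_rep a b p v w' (x j)"
      using word_rep_on_component[OF paths x ij(3)] by blast
    moreover have "linked a b p (x i) (x j)" using x ij by (simp add: rooted_homs_def homs_iff)
    ultimately show ?thesis by (rule word_transfer_linked)
  qed
  moreover have "x i0 = v" using x by (simp add: rooted_homs_def)
  ultimately show ?thesis
    using \<open>i0 \<in> I\<close> word_transfer_root by (simp add: rooted_homs_def homs_iff)
qed

lemma card_rooted_homs_le:
  assumes "finite I" "i0 \<in> I" and paths: "\<forall>j\<in>I. \<exists>d\<le>L. (i0, j) \<in> sym_edges_on I E ^^ d"
  shows "card (rooted_homs {1..<p} (linked a b p) I E i0 v) \<le>
    card (rooted_homs {1..<p'} (linked a' b' p') I E i0 v')"
proof (rule card_inj_on_le[OF inj_on_word_transfer_hom[OF paths]])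
  show "(\<lambda>x. restrict (word_transfer \<circ> x) I) ` rooted_homs {1..<p} (linked a b p) I E i0 v \<subseteq>
      rooted_homs {1..<p'} (linked a' b' p') I E i0 v'"
    using word_transfer_hom_in_rooted_homs[OF paths \<open>i0 \<in> I\<close>] by blast
  show "finite (rooted_homs {1..<p'} (linked a' b' p') I E i0 v')"
    by (rule finite_subset[OF _ finite_homs[OF \<open>finite I\<close> finite_atLeastLessThan]])
      (auto simp: rooted_homs_def)
qed

end

lemma card_rooted_homs_eq:
  assumes "unit_coeffs a b p" "unit_coeffs a' b' p'" "length a' = length a"
    and "v \<in> {1..<p}" "v' \<in> {1..<p'}"
    and "ratio_pattern a b p (Suc L) Q" "ratio_pattern a' b' p' (Suc L) Q"
    and "finite I" "i0 \<in> I" "\<forall>j\<in>I. \<exists>d\<le>L. (i0, j) \<in> sym_edges_on I E ^^ d"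
  shows "card (rooted_homs {1..<p} (linked a b p) I E i0 v) =
    card (rooted_homs {1..<p'} (linked a' b' p') I E i0 v')"
  using card_rooted_homs_le[OF assms(1-7) assms(8-10)]
    card_rooted_homs_le[OF assms(2,1) assms(3)[symmetric] assms(5,4,7,6) assms(8-10)]
  by simp

section \<open>The disjoint union of the graphs \<open>G(a,b,k)\<close>\<close>

lemma union_verts_eq: "union_verts ks = (\<Union>t<length ks. {t} \<times> {1..ks ! t})"
  by (auto simp: union_verts_def)

lemma finite_union_verts: "finite (union_verts ks)"
  by (simp add: union_verts_eq)

lemma card_union_verts: "card (union_verts ks) = sum_list ks"
proof -
  have "card (union_verts ks) = (\<Sum>t<length ks. card ({t} \<times> {1..ks ! t}))"
    unfolding union_verts_eq by (rule card_UN_disjoint) auto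
  also have "\<dots> = sum_list ks" by (simp add: sum_list_sum_nth atLeast0LessThan)
  finally show ?thesis .
qed

lemma union_adj_sym: "union_adj a b ks x y \<Longrightarrow> union_adj a b ks y x"
  by (auto simp: union_adj_def gadj_def)

lemma union_adj_irrefl: "\<not> union_adj a b ks x x"
  by (simp add: union_adj_def gadj_def)

lemma eq_or_union_adj_iff:
  "x = y \<or> union_adj a b ks x y \<longleftrightarrow> fst x = fst y \<and> linked a b (ks ! fst x + 1) (snd x) (snd y)"
  by (cases x; cases y) (auto simp: union_adj_def gadj_def linked_def)

lemma fst_constant_on_component:
  assumes "x \<in> homs (union_verts ks) (\<lambda>x y. x = y \<or> union_adj a b ks x y) C E"
  shows "(i0, j) \<in> (sym_edges_on C E)\<^sup>* \<Longrightarrow> fst (x j) = fst (x i0)"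
proof (induction rule: rtrancl_induct)
  case (step i j)
  then have "(i, j) \<in> E \<or> (j, i) \<in> E" "i \<in> C" "j \<in> C" by (auto simp: sym_edges_on_def)
  then have "fst (x i) = fst (x j)" using assms unfolding homs_iff union_adj_def by metis
  with step.IH show ?case by simp
qed simp

lemma rooted_union_hom_in_summand:
  assumes "i0 \<in> C" "\<forall>j\<in>C. (i0, j) \<in> (sym_edges_on C E)\<^sup>*"
    and x: "x \<in> rooted_homs (union_verts ks) (\<lambda>x y. x = y \<or> union_adj a b ks x y) C E i0 (t, v)"
  shows "restrict (\<lambda>j. (t, snd (x j))) C = x"
    and "restrict (snd \<circ> x) C \<in> rooted_homs {1..<ks ! t + 1} (linked a b (ks ! t + 1)) C E i0 v"
proof -
  have hom: "x \<in> homs (union_verts ks) (\<lambda>x y. x = y \<or> union_adj a b ks x y) C E" "x i0 = (t, v)"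
    using x by (simp_all add: rooted_homs_def)
  have fst: "fst (x j) = t" if "j \<in> C" for j
    using fst_constant_on_component[OF hom(1)] assms(2) that hom(2) by force
  have "x \<in> C \<rightarrow>\<^sub>E union_verts ks" using hom(1) by (simp add: homs_def)
  then show "restrict (\<lambda>j. (t, snd (x j))) C = x"
    using fst PiE_arb[OF \<open>x \<in> C \<rightarrow>\<^sub>E union_verts ks\<close>] by (auto simp: fun_eq_iff prod_eq_iff)
  have "snd (x j) \<in> {1..<ks ! t + 1}" if "j \<in> C" for j
    using PiE_mem[OF \<open>x \<in> C \<rightarrow>\<^sub>E union_verts ks\<close> that] fst[OF that] by (force simp: union_verts_def)
  moreover have "linked a b (ks ! t + 1) (snd (x i)) (snd (x j))" if "(i, j) \<in> E" "i \<in> C" "j \<in> C" for i j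
    using hom(1) that fst by (auto simp: homs_iff eq_or_union_adj_iff)
  ultimately show "restrict (snd \<circ> x) C \<in> rooted_homs {1..<ks ! t + 1} (linked a b (ks ! t + 1)) C E i0 v"
    using hom(2) \<open>i0 \<in> C\<close> by (auto simp: rooted_homs_def homs_iff)
qed

lemma summand_hom_in_rooted_union_homs:
  assumes "i0 \<in> C" "t < length ks"
    and y: "y \<in> rooted_homs {1..<ks ! t + 1} (linked a b (ks ! t + 1)) C E i0 v"
  shows "restrict (\<lambda>j. (t, y j)) C \<in> rooted_homs (union_verts ks) (\<lambda>x y. x = y \<or> union_adj a b ks x y) C E i0 (t, v)"
proof -
  have "y \<in> C \<rightarrow>\<^sub>E {1..<ks ! t + 1}" and "y i0 = v"
    and linked: "\<And>i j. (i, j) \<in> E \<Longrightarrow> i \<in> C \<Longrightarrow> j \<in> C \<Longrightarrow> linked a b (ks ! t + 1) (y i) (y j)"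
    using y by (simp_all add: rooted_homs_def homs_iff)
  have "(t, y j) \<in> union_verts ks" if "j \<in> C" for j
    using PiE_mem[OF \<open>y \<in> C \<rightarrow>\<^sub>E _\<close> that] \<open>t < length ks\<close> by (simp add: union_verts_def)
  moreover have "(t, y i) = (t, y j) \<or> union_adj a b ks (t, y i) (t, y j)"
    if "(i, j) \<in> E" "i \<in> C" "j \<in> C" for i j
    using linked[OF that] eq_or_union_adj_iff[of "(t, y i)" "(t, y j)" a b ks] by simp
  ultimately show ?thesis using \<open>y i0 = v\<close> assms(1) by (simp add: rooted_homs_def homs_iff)
qed

lemma card_rooted_union_homs:
  assumes "i0 \<in> C" "\<forall>j\<in>C. (i0, j) \<in> (sym_edges_on C E)\<^sup>*" "(t, v) \<in> union_verts ks"
  shows "card (rooted_homs (union_verts ks) (\<lambda>x y. x = y \<or> union_adj a b ks x y) C E i0 (t, v)) =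
    card (rooted_homs {1..<ks ! t + 1} (linked a b (ks ! t + 1)) C E i0 v)"
    (is "card ?U = card ?G")
proof (rule bij_betw_same_card[OF bij_betw_byWitness[where f = "\<lambda>x. restrict (snd \<circ> x) C"
      and f' = "\<lambda>y. restrict (\<lambda>j. (t, y j)) C"]])
  show "\<forall>x\<in>?U. restrict (\<lambda>j. (t, restrict (snd \<circ> x) C j)) C = x"
    using rooted_union_hom_in_summand(1)[OF assms(1,2)] by (simp cong: restrict_cong)
  show "\<forall>y\<in>?G. restrict (snd \<circ> restrict (\<lambda>j. (t, y j)) C) C = y"
    by (auto simp: rooted_homs_def homs_def cong: restrict_cong)
  show "(\<lambda>x. restrict (snd \<circ> x) C) ` ?U \<subseteq> ?G"
    using rooted_union_hom_in_summand(2)[OF assms(1,2)] by blast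
  have "t < length ks" using assms(3) by (simp add: union_verts_def)
  then show "(\<lambda>y. restrict (\<lambda>j. (t, y j)) C) ` ?G \<subseteq> ?U"
    using summand_hom_in_rooted_union_homs[OF assms(1)] by blast
qed

lemma num_indep_sets_eq_card_indep_sets:
  "num_indep_sets a b ks n = card (indep_sets (union_verts ks) (union_adj a b ks) n)"
  by (simp add: num_indep_sets_def indep_sets_def)

lemma card_union_homs_connected:
  assumes "finite C" "i0 \<in> C" "\<forall>j\<in>C. (i0, j) \<in> (sym_edges_on C E)\<^sup>*"
    and W: "\<And>t v. (t, v) \<in> union_verts ks \<Longrightarrow>
      card (rooted_homs {1..<ks ! t + 1} (linked a b (ks ! t + 1)) C E i0 v) = W"
  shows "card (homs (union_verts ks) (\<lambda>x y. x = y \<or> union_adj a b ks x y) C E) = sum_list ks * W"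
proof -
  have "card (homs (union_verts ks) (\<lambda>x y. x = y \<or> union_adj a b ks x y) C E) =
      (\<Sum>tv\<in>union_verts ks. card (rooted_homs (union_verts ks) (\<lambda>x y. x = y \<or> union_adj a b ks x y) C E i0 tv))"
    by (rule card_homs_eq_sum_rooted[OF finite_union_verts assms(1,2)])
  also have "\<dots> = (\<Sum>tv\<in>union_verts ks. W)"
    using card_rooted_union_homs[OF assms(2,3)] W by (intro sum.cong) auto
  also have "\<dots> = sum_list ks * W" by (simp add: card_union_verts)
  finally show ?thesis .
qed


lemma connected_paths_bounded:
  fixes n :: nat
  assumes "C \<subseteq> {0..<n}" "\<forall>j\<in>C. (i0, j) \<in> (sym_edges_on C E)\<^sup>*"
  shows "\<forall>j\<in>C. \<exists>d\<le>n * n. (i0, j) \<in> sym_edges_on C E ^^ d"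
proof
  fix j assume "j \<in> C"
  have "finite C" using assms(1) finite_subset by blast
  have sub: "sym_edges_on C E \<subseteq> C \<times> C" by (auto simp: sym_edges_on_def)
  have fin: "finite (sym_edges_on C E)" using finite_subset[OF sub] \<open>finite C\<close> by simp
  have "card (sym_edges_on C E) \<le> card C * card C"
    using card_mono[OF _ sub] \<open>finite C\<close> by (simp add: card_cartesian_product)
  also have "\<dots> \<le> n * n" using card_mono[OF _ assms(1)] by (simp add: mult_le_mono)
  moreover obtain d where "d \<le> card (sym_edges_on C E)" "(i0, j) \<in> sym_edges_on C E ^^ d"
    using assms(2) \<open>j \<in> C\<close> unfolding rtrancl_finite_eq_relpow[OF fin] by blast
  ultimately show "\<exists>d\<le>n * n. (i0, j) \<in> sym_edges_on C E ^^ d"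
    by (intro exI[of _ d]) simp
qed

lemma card_union_homs_connected_eq_rooted:
  assumes "finite C" "i0 \<in> C" "\<forall>j\<in>C. (i0, j) \<in> (sym_edges_on C E)\<^sup>*"
    and paths: "\<forall>j\<in>C. \<exists>d\<le>L. (i0, j) \<in> sym_edges_on C E ^^ d"
    and models: "\<forall>k\<in>set ks. unit_coeffs a b (k + 1) \<and> ratio_pattern a b (k + 1) (Suc L) Q"
    and ref: "unit_coeffs a0 b0 p0" "length a = length a0" "v0 \<in> {1..<p0}"
      "ratio_pattern a0 b0 p0 (Suc L) Q"
  shows "card (homs (union_verts ks) (\<lambda>x y. x = y \<or> union_adj a b ks x y) C E) =
    sum_list ks * card (rooted_homs {1..<p0} (linked a0 b0 p0) C E i0 v0)"
proof (rule card_union_homs_connected[OF assms(1-3)])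
  fix t v assume "(t, v) \<in> union_verts ks"
  then have "ks ! t \<in> set ks" "v \<in> {1..<ks ! t + 1}" by (auto simp: union_verts_def)
  then show "card (rooted_homs {1..<ks ! t + 1} (linked a b (ks ! t + 1)) C E i0 v) =
      card (rooted_homs {1..<p0} (linked a0 b0 p0) C E i0 v0)"
    using models ref by (intro card_rooted_homs_eq[OF _ _ _ _ _ _ _ \<open>finite C\<close> \<open>i0 \<in> C\<close> paths]) auto
qed

lemma num_indep_sets_eq_if_same_pattern:
  fixes n :: nat
  assumes "length a' = length a" "ks \<noteq> []" "sum_list ks = sum_list ks'"
    and models: "\<forall>k\<in>set ks. unit_coeffs a b (k + 1) \<and> ratio_pattern a b (k + 1) (Suc (n * n)) Q"
    and models': "\<forall>k\<in>set ks'. unit_coeffs a' b' (k + 1) \<and> ratio_pattern a' b' (k + 1) (Suc (n * n)) Q"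
  shows "num_indep_sets a b ks n = num_indep_sets a' b' ks' n"
proof -
  obtain k0 where "k0 \<in> set ks" using hd_in_set[OF \<open>ks \<noteq> []\<close>] by blast
  then have ref: "unit_coeffs a b (k0 + 1)" "1 \<in> {1..<k0 + 1}"
      "ratio_pattern a b (k0 + 1) (Suc (n * n)) Q"
    using models prime_gt_1_nat[of "k0 + 1"] by (auto simp: unit_coeffs_def)
  have component_eq: "card (homs (union_verts ks) (\<lambda>x y. x = y \<or> union_adj a b ks x y) C E) =
      card (homs (union_verts ks') (\<lambda>x y. x = y \<or> union_adj a' b' ks' x y) C E)"
    if "C \<subseteq> {0..<n}" "i0 \<in> C" and connected: "\<forall>j\<in>C. (i0, j) \<in> (sym_edges_on C E)\<^sup>*" for C i0 E
  proof -
    have "finite C" using \<open>C \<subseteq> {0..<n}\<close> finite_subset by blast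
    note paths = connected_paths_bounded[OF \<open>C \<subseteq> {0..<n}\<close> connected]
    show ?thesis
      using card_union_homs_connected_eq_rooted[OF \<open>finite C\<close> \<open>i0 \<in> C\<close> connected paths models
          ref(1) refl ref(2,3)]
        card_union_homs_connected_eq_rooted[OF \<open>finite C\<close> \<open>i0 \<in> C\<close> connected paths models'
          ref(1) \<open>length a' = length a\<close> ref(2,3)]
        \<open>sum_list ks = sum_list ks'\<close> by simp
  qed
  have "card (homs (union_verts ks) (\<lambda>x y. x = y \<or> union_adj a b ks x y) {0..<n} F) =
      card (homs (union_verts ks') (\<lambda>x y. x = y \<or> union_adj a' b' ks' x y) {0..<n} F)" for F
    by (rule card_homs_eq_if_connected_eq[OF finite_atLeastLessThan component_eq])
  then show ?thesis
    unfolding num_indep_sets_eq_card_indep_sets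
    by (intro card_indep_sets_eq_if_card_homs_eq) (simp_all add: finite_union_verts union_adj_sym union_adj_irrefl)
qed

section \<open>Large primes and multiplicative independence\<close>

definition same_ratio :: "nat list \<Rightarrow> nat list \<Rightarrow> word \<Rightarrow> word \<Rightarrow> bool" where
  "same_ratio a b w w' \<longleftrightarrow> word_num a b w * word_den a b w' = word_num a b w' * word_den a b w"

text \<open>
  Above this bound, the two sides of the cross-multiplied equation between the ratios of two words
  of length at most \<open>h\<close> are smaller than \<open>p\<close>, so congruence modulo \<open>p\<close> is equality.
\<close>

definition prime_bound :: "nat list \<Rightarrow> nat list \<Rightarrow> nat \<Rightarrow> nat" where
  "prime_bound a b h = (sum_list a + sum_list b + 1) ^ (2 * h)"

lemma word_num_den_le:
  assumes "length b = length a" "w \<in> lists ({..<length a} \<times> UNIV)"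
  shows "word_num a b w \<le> (sum_list a + sum_list b) ^ length w \<and>
    word_den a b w \<le> (sum_list a + sum_list b) ^ length w"
  using assms(2)
proof (induction w)
  case (Cons l w)
  then have "fst l < length a" by auto
  then have "letter_num a b l \<le> sum_list a + sum_list b \<and> letter_den a b l \<le> sum_list a + sum_list b"
    using elem_le_sum_list[of "fst l" a] elem_le_sum_list[of "fst l" b] assms(1)
    by (auto simp: letter_num_def letter_den_def)
  with Cons show ?case by (simp add: word_num_def word_den_def mult_le_mono)
qed (simp add: word_num_def word_den_def)

lemma power_le_power_succ: "k \<le> h \<Longrightarrow> (x :: nat) ^ k \<le> (x + 1) ^ h"
  using power_mono[of x "x + 1" k] power_increasing[of k h "x + 1"] by simp

lemma unit_coeffs_if_large:
  assumes "admissible m a b" "prime p" "sum_list a + sum_list b < p"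
  shows "unit_coeffs a b p"
proof -
  have "length b = length a" and pos: "\<forall>r<length a. 0 < a ! r \<and> 0 < b ! r"
    using assms(1) by (auto simp: admissible_def)
  moreover have "a ! r < p \<and> b ! r < p" if "r < length a" for r
    using elem_le_sum_list[of r a] elem_le_sum_list[of r b] that \<open>length b = length a\<close> assms(3)
    by linarith
  ultimately show ?thesis using assms(2) by (simp add: unit_coeffs_def Suc_le_eq)
qed

lemma ratio_pattern_if_large:
  assumes "admissible m a b" "prime_bound a b h < p"
  shows "ratio_pattern a b p h (same_ratio a b)"
  unfolding ratio_pattern_def
proof (intro ballI)
  fix w w' assume "w \<in> short_words (length a) h" "w' \<in> short_words (length a) h"
  then have words: "w \<in> lists ({..<length a} \<times> UNIV)" "w' \<in> lists ({..<length a} \<times> UNIV)"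
    and lengths: "length w \<le> h" "length w' \<le> h" by (auto simp: short_words_def)
  let ?A = "sum_list a + sum_list b"
  have "length b = length a" using assms(1) by (simp add: admissible_def)
  have bound: "word_num a b u * word_den a b u' < p"
    if "u \<in> lists ({..<length a} \<times> UNIV)" "u' \<in> lists ({..<length a} \<times> UNIV)"
       "length u \<le> h" "length u' \<le> h" for u u'
  proof -
    have "word_num a b u * word_den a b u' \<le> ?A ^ length u * ?A ^ length u'"
      using word_num_den_le[OF \<open>length b = length a\<close> that(1)]
        word_num_den_le[OF \<open>length b = length a\<close> that(2)] by (auto intro: mult_le_mono)
    also have "\<dots> \<le> (?A + 1) ^ h * (?A + 1) ^ h"
      using that(3,4) by (intro mult_le_mono power_le_power_succ)
    also have "\<dots> = prime_bound a b h" by (simp add: prime_bound_def mult_2 power_add)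
    finally show ?thesis using assms(2) by simp
  qed
  show "same_ratio_mod a b p w w' \<longleftrightarrow> same_ratio a b w w'"
    using bound[OF words lengths] bound[OF words(2,1) lengths(2,1)]
    by (auto simp: same_ratio_mod_def same_ratio_def cong_less_modulus_unique_nat)
qed

definition same_balance :: "nat \<Rightarrow> word \<Rightarrow> word \<Rightarrow> bool" where
  "same_balance m w w' \<longleftrightarrow> (\<forall>r<m.
     int (count_list w (r, True)) - int (count_list w (r, False)) =
     int (count_list w' (r, True)) - int (count_list w' (r, False)))"

lemma word_num_den_eq_prod:
  assumes "w \<in> lists ({..<length a} \<times> UNIV)"
  shows "word_num a b w = (\<Prod>r<length a. a ! r ^ count_list w (r, True) * b ! r ^ count_list w (r, False)) \<and>
    word_den a b w = (\<Prod>r<length a. b ! r ^ count_list w (r, True) * a ! r ^ count_list w (r, False))"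
  using assms
proof (induction w)
  case (Cons l w)
  obtain r0 s where l: "l = (r0, s)" by fastforce
  from Cons have "r0 < length a" using l by auto
  have num: "a ! r ^ count_list (l # w) (r, True) * b ! r ^ count_list (l # w) (r, False) =
      a ! r ^ count_list w (r, True) * b ! r ^ count_list w (r, False) * (if r = r0 then letter_num a b l else 1)"
    and den: "b ! r ^ count_list (l # w) (r, True) * a ! r ^ count_list (l # w) (r, False) =
      b ! r ^ count_list w (r, True) * a ! r ^ count_list w (r, False) * (if r = r0 then letter_den a b l else 1)"
    for r by (cases s; cases "r = r0"; simp add: l letter_num_def letter_den_def)+
  have factor: "(\<Prod>r<length a. f r * (if r = r0 then c else 1)) = (\<Prod>r<length a. f r) * c"
    for f :: "nat \<Rightarrow> nat" and c
    using \<open>r0 < length a\<close> by (simp add: prod.distrib prod.delta)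
  show ?case
    unfolding num den factor using Cons by (simp add: word_num_def word_den_def mult.commute)
qed (simp add: word_num_def word_den_def)

lemma prod_ratios_power_int:
  assumes "length b = length a" "\<forall>r<length a. 0 < a ! r \<and> 0 < b ! r"
  shows "(\<Prod>r<length a. ratios a b ! r powi (int (X r) - int (Y r))) =
    of_nat (\<Prod>r<length a. a ! r ^ X r * b ! r ^ Y r) / of_nat (\<Prod>r<length a. a ! r ^ Y r * b ! r ^ X r)"
proof -
  have "ratios a b ! r powi (int (X r) - int (Y r)) =
      of_nat (a ! r ^ X r * b ! r ^ Y r) / of_nat (a ! r ^ Y r * b ! r ^ X r)" if "r < length a" for r
    using that assms(2) by (simp add: ratios_def power_int_diff power_divide field_simps)
  then show ?thesis by (simp add: prod_dividef)
qed

lemma same_ratio_iff_same_balance: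
  assumes "admissible m a b" "mult_indep (ratios a b)"
    and "w \<in> lists ({..<m} \<times> UNIV)" "w' \<in> lists ({..<m} \<times> UNIV)"
  shows "same_ratio a b w w' \<longleftrightarrow> same_balance m w w'"
proof -
  have m: "length a = m" "length b = length a" and pos: "\<forall>r<length a. 0 < a ! r \<and> 0 < b ! r"
    using assms(1) by (auto simp: admissible_def)
  define X where "X r = count_list w (r, True) + count_list w' (r, False)" for r
  define Y where "Y r = count_list w (r, False) + count_list w' (r, True)" for r
  have "same_ratio a b w w' \<longleftrightarrow>
      (\<Prod>r<length a. a ! r ^ X r * b ! r ^ Y r) = (\<Prod>r<length a. a ! r ^ Y r * b ! r ^ X r)"
    using word_num_den_eq_prod[of w a b] word_num_den_eq_prod[of w' a b] assms(3,4) m(1)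
    by (simp add: same_ratio_def X_def Y_def prod.distrib[symmetric] power_add ac_simps)
  also have "\<dots> \<longleftrightarrow> (\<Prod>r<length a. ratios a b ! r powi (int (X r) - int (Y r))) = (1 :: rat)"
    using pos by (simp add: prod_ratios_power_int[OF m(2) pos] prod_zero_iff del: of_nat_prod)
      (rule eq_commute)
  also have "\<dots> \<longleftrightarrow> (\<forall>r<m. X r = Y r)"
  proof
    assume "(\<Prod>r<length a. ratios a b ! r powi (int (X r) - int (Y r))) = 1"
    then show "\<forall>r<m. X r = Y r"
      using assms(2) m(1) unfolding mult_indep_def by (fastforce simp: ratios_def)
  qed (simp add: m(1))
  also have "\<dots> \<longleftrightarrow> same_balance m w w'" by (auto simp: same_balance_def X_def Y_def)
  finally show ?thesis .
qed

lemma large_prime_models: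
  assumes "admissible m a b" "\<forall>k\<in>set ks. prime (k + 1) \<and> prime_bound a b (Suc h) < k + 1"
  shows "\<forall>k\<in>set ks. unit_coeffs a b (k + 1) \<and> ratio_pattern a b (k + 1) (Suc h) (same_ratio a b)"
proof -
  have "sum_list a + sum_list b + 1 \<le> prime_bound a b (Suc h)"
    unfolding prime_bound_def by (rule self_le_power) simp_all
  show ?thesis
  proof
    fix k assume "k \<in> set ks"
    then have k: "prime (k + 1)" "prime_bound a b (Suc h) < k + 1" using assms(2) by auto
    then show "unit_coeffs a b (k + 1) \<and> ratio_pattern a b (k + 1) (Suc h) (same_ratio a b)"
      using unit_coeffs_if_large[OF assms(1) k(1)] ratio_pattern_if_large[OF assms(1) k(2)]
        \<open>sum_list a + sum_list b + 1 \<le> prime_bound a b (Suc h)\<close> by simp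
  qed
qed

lemma large_prime_models_balanced:
  assumes "admissible m a b" "mult_indep (ratios a b)"
    and "\<forall>k\<in>set ks. prime (k + 1) \<and> prime_bound a b (Suc h) < k + 1"
  shows "\<forall>k\<in>set ks. unit_coeffs a b (k + 1) \<and> ratio_pattern a b (k + 1) (Suc h) (same_balance m)"
proof -
  have "length a = m" using assms(1) by (simp add: admissible_def)
  then have "ratio_pattern a b p (Suc h) (same_ratio a b) \<longleftrightarrow> ratio_pattern a b p (Suc h) (same_balance m)" for p
    using same_ratio_iff_same_balance[OF assms(1,2)] by (simp add: ratio_pattern_def short_words_def)
  then show ?thesis using large_prime_models[OF assms(1,3)] by simp
qed

lemma ex_factorization:
  assumes "\<And>x y. x \<in> A \<Longrightarrow> y \<in> A \<Longrightarrow> g x = g y \<Longrightarrow> f x = f y"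
  shows "\<exists>P. \<forall>x\<in>A. f x = P (g x)"
proof
  show "\<forall>x\<in>A. f x = (\<lambda>k. f (SOME y. y \<in> A \<and> g y = k)) (g x)"
    using assms by (metis (mono_tags, lifting) someI)
qed

lemma indep_count_function_exists:
  fixes n :: nat
  assumes adm: "admissible m a b"
  shows "\<exists>P :: nat \<Rightarrow> rat. \<exists>N :: nat. \<forall>ks :: nat list.
    length ks \<ge> 1 \<and> (\<forall>k\<in>set ks. k > 0 \<and> prime (k+1) \<and> k+1 > N) \<longrightarrow>
    of_nat (num_indep_sets a b ks n) = P (sum_list ks)"
proof -
  let ?N = "prime_bound a b (Suc (n * n))"
  let ?good = "\<lambda>ks. length ks \<ge> 1 \<and> (\<forall>k\<in>set ks. k > 0 \<and> prime (k+1) \<and> k+1 > ?N)"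
  have "\<exists>P. \<forall>ks\<in>Collect ?good. of_nat (num_indep_sets a b ks n) = (P (sum_list ks) :: rat)"
  proof (rule ex_factorization)
    fix ks ks' assume "ks \<in> Collect ?good" "ks' \<in> Collect ?good" and sums: "sum_list ks = sum_list ks'"
    then have "ks \<noteq> []" and "\<forall>k\<in>set ks. prime (k+1) \<and> k+1 > ?N"
      and "\<forall>k\<in>set ks'. prime (k+1) \<and> k+1 > ?N"
      by (auto simp: Suc_le_eq)
    from num_indep_sets_eq_if_same_pattern[OF refl this(1) sums large_prime_models[OF adm this(2)]
        large_prime_models[OF adm this(3)]]
    show "of_nat (num_indep_sets a b ks n) = (of_nat (num_indep_sets a b ks' n) :: rat)" by simp
  qed
  then obtain P where "\<forall>ks\<in>Collect ?good. of_nat (num_indep_sets a b ks n) = (P (sum_list ks) :: rat)" ..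
  then show ?thesis by (intro exI[of _ P] exI[of _ "?N"]) simp
qed

lemma indep_count_function_uniform:
  fixes n :: nat
  shows "\<exists>P :: nat \<Rightarrow> rat. \<forall>a b. admissible m a b \<and> mult_indep (ratios a b) \<longrightarrow>
    (\<exists>N :: nat. \<forall>ks :: nat list.
      length ks \<ge> 1 \<and> (\<forall>k\<in>set ks. k > 0 \<and> prime (k+1) \<and> k+1 > N) \<longrightarrow>
      of_nat (num_indep_sets a b ks n) = P (sum_list ks))"
proof -
  let ?good = "\<lambda>(a, b, ks). admissible m a b \<and> mult_indep (ratios a b) \<and> length ks \<ge> 1 \<and>
    (\<forall>k\<in>set ks. k > 0 \<and> prime (k+1) \<and> k+1 > prime_bound a b (Suc (n * n)))"
  let ?count = "\<lambda>(a, b, ks). of_nat (num_indep_sets a b ks n) :: rat"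
  have "\<exists>P. \<forall>x\<in>Collect ?good. ?count x = P ((\<lambda>(a, b, ks). sum_list ks) x)"
  proof (rule ex_factorization)
    fix x y assume "x \<in> Collect ?good" "y \<in> Collect ?good"
      and sums: "(\<lambda>(a, b, ks). sum_list ks) x = (\<lambda>(a, b, ks). sum_list ks) y"
    obtain a b ks a' b' ks' where xy: "x = (a, b, ks)" "y = (a', b', ks')" by (cases x, cases y)
    with \<open>x \<in> Collect ?good\<close> \<open>y \<in> Collect ?good\<close>
    have good: "admissible m a b" "mult_indep (ratios a b)" "ks \<noteq> []"
        "\<forall>k\<in>set ks. prime (k+1) \<and> k+1 > prime_bound a b (Suc (n * n))"
      and good': "admissible m a' b'" "mult_indep (ratios a' b')"
        "\<forall>k\<in>set ks'. prime (k+1) \<and> k+1 > prime_bound a' b' (Suc (n * n))"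
      by (auto simp: Suc_le_eq)
    have "length a' = length a" using good(1) good'(1) by (simp add: admissible_def)
    from num_indep_sets_eq_if_same_pattern[OF this good(3) _
        large_prime_models_balanced[OF good(1,2,4)] large_prime_models_balanced[OF good'(1,2,3)]]
    show "?count x = ?count y" using sums by (simp add: xy)
  qed
  then obtain P where P: "\<forall>x\<in>Collect ?good. ?count x = P ((\<lambda>(a, b, ks). sum_list ks) x)" ..
  have "\<forall>a b. admissible m a b \<and> mult_indep (ratios a b) \<longrightarrow> (\<exists>N. \<forall>ks.
      length ks \<ge> 1 \<and> (\<forall>k\<in>set ks. k > 0 \<and> prime (k+1) \<and> k+1 > N) \<longrightarrow>
      of_nat (num_indep_sets a b ks n) = P (sum_list ks))"
  proof (intro allI impI)
    fix a b assume ab: "admissible m a b \<and> mult_indep (ratios a b)"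
    show "\<exists>N. \<forall>ks. length ks \<ge> 1 \<and> (\<forall>k\<in>set ks. k > 0 \<and> prime (k+1) \<and> k+1 > N) \<longrightarrow>
        of_nat (num_indep_sets a b ks n) = P (sum_list ks)"
    proof (rule exI[of _ "prime_bound a b (Suc (n * n))"], intro allI impI)
      fix ks assume "length ks \<ge> 1 \<and> (\<forall>k\<in>set ks. k > 0 \<and> prime (k+1) \<and> k+1 > prime_bound a b (Suc (n * n)))"
      with ab have "(a, b, ks) \<in> Collect ?good" by simp
      from P[rule_format, OF this] show "of_nat (num_indep_sets a b ks n) = P (sum_list ks)" by simp
    qed
  qed
  then show ?thesis by (rule exI[of _ P])
qed

theorem corollary3p2:
  fixes n :: nat
  shows "(\<forall>m a b. admissible m a b \<longrightarrow>
            (\<exists>P :: nat \<Rightarrow> rat. \<exists>N :: nat. \<forall>ks :: nat list.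
               length ks \<ge> 1 \<and> (\<forall>k\<in>set ks. k > 0 \<and> prime (k+1) \<and> k+1 > N) \<longrightarrow>
               of_nat (num_indep_sets a b ks n) = P (sum_list ks)))
       \<and> (\<forall>m. \<exists>P :: nat \<Rightarrow> rat. \<forall>a b. admissible m a b \<and> mult_indep (ratios a b) \<longrightarrow>
            (\<exists>N :: nat. \<forall>ks :: nat list.
               length ks \<ge> 1 \<and> (\<forall>k\<in>set ks. k > 0 \<and> prime (k+1) \<and> k+1 > N) \<longrightarrow>
               of_nat (num_indep_sets a b ks n) = P (sum_list ks)))"
  by (intro conjI allI impI indep_count_function_uniform) (rule indep_count_function_exists)

end
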